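(* Let $p$ be an odd prime, $G=\mu_p$, $x\in G$ a generator and $\alpha$ an integer whose class generates $(\mathbb{Z}/p\mathbb{Z})^\times$. For each divisor $u$ of $p-1$, put $r+1=(p-1)/u$ (the multiplicative order of $\beta:=\alpha^u$ modulo $p$), $I=\{1\}$ and $$A_i=\{x^{\alpha^i},x^{\alpha^i\beta},\dots,x^{\alpha^i\beta^r}\},\qquad i=0,\dots,u-1.$$ Then $\mathcal{P}=\{I,A_0,\dots,A_{u-1}\}$ is a unital partition of $G$, and every unital partition of $G$ arises in this way for some $u\mid p-1$. Moreover, every unital partition of $\mu_p$ is a fusion partition.
   Context: A unital partition of a finite commutative group $G$ is a partition $G=I\sqcup A_0\sqcup\dots\sqcup A_s$ with $I=\{1\}$ such that, with $a_i=\sum_{x\in A_i}x\in\mathbb{Z}[G]$, the $\mathbb{Z}$-span of $1$ and the $a_i$ is closed under multiplication in $\mathbb{Z}[G]$. It is a fusion partition if in addition: (1) for every member $A_i$ there is a member $A_{i^*}$ with $A_{i^*}=\{x^{-1}\mid x\in A_i\}$; and (2) writing $a_ia_j=\sum_k n^k_{i,j}a_k$ (sum over all members of the partition, including $I$), one has $n^k_{i,j}|A_k|=n^{j^*}_{i,k^*}|A_{j^*}|$ for all $i,j,k$. *)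

theory Defs
  imports "HOL-Algebra.Algebra" "HOL-Number_Theory.Cong" Complex_Main
begin

text \<open>Group ring Z[G] of a finite group G: functions from carrier G to int (zero outside).
  Multiplication is convolution.\<close>

definition gr_mult :: "('a, 'b) monoid_scheme \<Rightarrow> ('a \<Rightarrow> int) \<Rightarrow> ('a \<Rightarrow> int) \<Rightarrow> ('a \<Rightarrow> int)" where
  "gr_mult G f g = (\<lambda>z. if z \<in> carrier G
      then (\<Sum>y\<in>carrier G. f y * g (inv\<^bsub>G\<^esub> y \<otimes>\<^bsub>G\<^esub> z)) else 0)"

text \<open>The element a = sum of x over x in A.\<close>
definition setsum_elt :: "'a set \<Rightarrow> ('a \<Rightarrow> int)" where
  "setsum_elt A = (\<lambda>z. if z \<in> A then 1 else 0)"

definition lincomb :: "'a set set \<Rightarrow> ('a set \<Rightarrow> int) \<Rightarrow> ('a \<Rightarrow> int)" where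
  "lincomb P c = (\<lambda>z. \<Sum>A\<in>P. c A * setsum_elt A z)"

definition zspan :: "'a set set \<Rightarrow> ('a \<Rightarrow> int) set" where
  "zspan P = {f. \<exists>c. f = lincomb P c}"

definition is_partition_with_unit :: "('a, 'b) monoid_scheme \<Rightarrow> 'a set set \<Rightarrow> bool" where
  "is_partition_with_unit G P \<longleftrightarrow>
     {\<one>\<^bsub>G\<^esub>} \<in> P \<and> (\<forall>A\<in>P. A \<noteq> {} \<and> A \<subseteq> carrier G) \<and>
     (\<forall>A\<in>P. \<forall>B\<in>P. A \<noteq> B \<longrightarrow> A \<inter> B = {}) \<and> \<Union>P = carrier G"

text \<open>Unital partition: the Z-span of 1 and the a_i is closed under multiplication in Z[G].
  (1 = the element of {1}, which is a member of P.)\<close>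
definition unital_partition :: "('a, 'b) monoid_scheme \<Rightarrow> 'a set set \<Rightarrow> bool" where
  "unital_partition G P \<longleftrightarrow> is_partition_with_unit G P \<and>
     (\<forall>f\<in>zspan P. \<forall>g\<in>zspan P. gr_mult G f g \<in> zspan P)"

definition struct_const :: "('a, 'b) monoid_scheme \<Rightarrow> 'a set set \<Rightarrow> 'a set \<Rightarrow> 'a set \<Rightarrow> 'a set \<Rightarrow> int" where
  "struct_const G P A B C =
     (THE n. \<exists>c. gr_mult G (setsum_elt A) (setsum_elt B) = lincomb P c \<and> c C = n)"

definition inv_set :: "('a, 'b) monoid_scheme \<Rightarrow> 'a set \<Rightarrow> 'a set" where
  "inv_set G A = (\<lambda>x. inv\<^bsub>G\<^esub> x) ` A"

definition fusion_partition :: "('a, 'b) monoid_scheme \<Rightarrow> 'a set set \<Rightarrow> bool" where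
  "fusion_partition G P \<longleftrightarrow> unital_partition G P \<and>
     (\<forall>A\<in>P. inv_set G A \<in> P) \<and>
     (\<forall>A\<in>P. \<forall>B\<in>P. \<forall>C\<in>P.
        struct_const G P A B C * int (card C)
        = struct_const G P A (inv_set G C) (inv_set G B) * int (card (inv_set G B)))"

definition mu :: "nat \<Rightarrow> complex monoid" where
  "mu p = \<lparr>carrier = {z. z ^ p = 1}, monoid.mult = (*), one = 1\<rparr>"

definition unit_group_generator :: "nat \<Rightarrow> int \<Rightarrow> bool" where
  "unit_group_generator p \<alpha> \<longleftrightarrow> coprime \<alpha> (int p) \<and>
     (\<forall>k::int. coprime k (int p) \<longrightarrow> (\<exists>i::nat. [\<alpha> ^ i = k] (mod int p)))"

definition Apart :: "nat \<Rightarrow> complex \<Rightarrow> int \<Rightarrow> nat \<Rightarrow> nat \<Rightarrow> complex set" where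
  "Apart p x \<alpha> u i = (let \<beta> = \<alpha> ^ u; r = (p - 1) div u - 1 in
      {x [^]\<^bsub>mu p\<^esub> (\<alpha> ^ i * \<beta> ^ j) | j. j \<le> r})"

definition Ppart :: "nat \<Rightarrow> complex \<Rightarrow> int \<Rightarrow> nat \<Rightarrow> complex set set" where
  "Ppart p x \<alpha> u = insert {1} {Apart p x \<alpha> u i | i. i < u}"

end

theory Submission
  imports Defs "HOL-Number_Theory.Number_Theory" "HOL-Computational_Algebra.Polynomial"
begin

text \<open>
  Classification of the unital partitions of \<open>\<mu>\<^sub>p\<close>, the group of complex \<open>p\<close>-th roots of
  unity for a prime \<open>p\<close>.

  Structure constants of a unital partition count solutions of
  \<open>y b = z\<close>, and an involution on these solutions shows that a unital partition of a finite
  abelian group with inverse-closed blocks is a fusion partition.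

  Integer polynomials map homomorphically onto \<open>\<int>[\<mu>\<^sub>p]\<close> via \<open>X \<mapsto> x\<close>, and
  the freshman's dream gives Schur's multiplier theorem: every power map \<open>z \<mapsto> z\<^sup>m\<close> with
  \<open>p \<nmid> m\<close> permutes the blocks of a unital partition; with \<open>m = p - 1\<close> this gives inverse
  closure and hence the fusion property. Finally, the primitive root \<open>\<alpha>\<close> gives the discrete
  logarithm \<open>\<gamma> e = x\<^bsup>\<alpha>\<^sup>e\<^esup>\<close>, under which \<open>\<P>\<^sub>u\<close> becomes the partition of \<open>\<int>/(p - 1)\<close> into
  residue classes modulo \<open>u\<close>, which is closed under convolution since it consists of the
  orbits of an automorphism; conversely, the exponents in the block of \<open>x\<close> of a unital
  partition form a subgroup \<open>u\<int>/(p - 1)\<close>, and that partition is \<open>\<P>\<^sub>u\<close>.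
\<close>

definition same_block :: "'a set set \<Rightarrow> 'a \<Rightarrow> 'a \<Rightarrow> bool" where
  "same_block P z w \<longleftrightarrow> (\<exists>A\<in>P. z \<in> A \<and> w \<in> A)"

lemma same_block_sym: "same_block P z w \<longleftrightarrow> same_block P w z"
  unfolding same_block_def by blast

locale block_partition =
  fixes G :: "('a, 'b) monoid_scheme" and P :: "'a set set"
  assumes partition: "is_partition_with_unit G P"
    and finite_carrier: "finite (carrier G)"
begin

lemma unit_block: "{\<one>\<^bsub>G\<^esub>} \<in> P"
  and block_subset: "A \<in> P \<Longrightarrow> A \<subseteq> carrier G"
  and block_nonempty: "A \<in> P \<Longrightarrow> A \<noteq> {}"
  and block_cover: "z \<in> carrier G \<Longrightarrow> \<exists>A\<in>P. z \<in> A"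
  using partition unfolding is_partition_with_unit_def by auto

lemma block_unique: "A \<in> P \<Longrightarrow> B \<in> P \<Longrightarrow> z \<in> A \<Longrightarrow> z \<in> B \<Longrightarrow> A = B"
  using partition unfolding is_partition_with_unit_def by blast

lemma finite_partition: "finite P"
  using finite_carrier block_subset by (meson Pow_iff finite_Pow_iff finite_subset subsetI)

lemma finite_block: "A \<in> P \<Longrightarrow> finite A"
  using finite_carrier block_subset finite_subset by blast

lemma block_eq_same_block: "A \<in> P \<Longrightarrow> z \<in> A \<Longrightarrow> A = {w. same_block P z w}"
  unfolding same_block_def using block_unique by blast

lemma partition_eq_same_blocks: "P = (\<lambda>z. {w. same_block P z w}) ` carrier G"
proof (intro equalityI subsetI)
  fix A assume A: "A \<in> P"
  then obtain z where z: "z \<in> A" using block_nonempty by blast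
  then have "z \<in> carrier G" using A block_subset by blast
  moreover have "A = {w. same_block P z w}" by (rule block_eq_same_block[OF A z])
  ultimately show "A \<in> (\<lambda>z. {w. same_block P z w}) ` carrier G" by blast
next
  fix A assume "A \<in> (\<lambda>z. {w. same_block P z w}) ` carrier G"
  then obtain z where z: "z \<in> carrier G" "A = {w. same_block P z w}" by blast
  obtain B where B: "B \<in> P" "z \<in> B" using block_cover[OF z(1)] by blast
  show "A \<in> P" using block_eq_same_block[OF B] B(1) z(2) by simp
qed

lemma same_block_unit: "same_block P \<one>\<^bsub>G\<^esub> w \<longleftrightarrow> w = \<one>\<^bsub>G\<^esub>"
  using unit_block block_unique unfolding same_block_def by blast

lemma lincomb_at_block: "A \<in> P \<Longrightarrow> z \<in> A \<Longrightarrow> lincomb P c z = c A"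
proof -
  assume A: "A \<in> P" "z \<in> A"
  have "lincomb P c z = (\<Sum>B\<in>P. if B = A then c A else 0)"
    unfolding lincomb_def using A block_unique by (intro sum.cong) (auto simp: setsum_elt_def)
  also have "\<dots> = c A" using A finite_partition by simp
  finally show ?thesis .
qed

lemma lincomb_outside: "z \<notin> carrier G \<Longrightarrow> lincomb P c z = 0"
  unfolding lincomb_def setsum_elt_def using block_subset by (intro sum.neutral) auto

lemma zspan_iff:
  "f \<in> zspan P \<longleftrightarrow> (\<forall>z. z \<notin> carrier G \<longrightarrow> f z = 0) \<and> (\<forall>A\<in>P. \<forall>z\<in>A. \<forall>w\<in>A. f z = f w)"
proof
  assume "f \<in> zspan P"
  then obtain c where "f = lincomb P c" by (auto simp: zspan_def)
  then show "(\<forall>z. z \<notin> carrier G \<longrightarrow> f z = 0) \<and> (\<forall>A\<in>P. \<forall>z\<in>A. \<forall>w\<in>A. f z = f w)"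
    using lincomb_outside lincomb_at_block by simp
next
  assume f: "(\<forall>z. z \<notin> carrier G \<longrightarrow> f z = 0) \<and> (\<forall>A\<in>P. \<forall>z\<in>A. \<forall>w\<in>A. f z = f w)"
  define c where "c A = f (SOME z. z \<in> A)" for A
  have "f z = lincomb P c z" for z
  proof (cases "z \<in> carrier G")
    case True
    then obtain A where A: "A \<in> P" "z \<in> A" using block_cover by blast
    then have "(SOME z. z \<in> A) \<in> A" by (metis someI)
    then show ?thesis using f A unfolding lincomb_at_block[OF A] c_def by blast
  next
    case False
    then show ?thesis using f lincomb_outside by presburger
  qed
  then show "f \<in> zspan P" unfolding zspan_def by blast
qed

lemma indicator_in_zspan_iff:
  assumes "S \<subseteq> carrier G"
  shows "setsum_elt S \<in> zspan P \<longleftrightarrow> (\<forall>A\<in>P. \<forall>z\<in>A. z \<in> S \<longrightarrow> A \<subseteq> S)"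
proof -
  have "(\<forall>z\<in>A. \<forall>w\<in>A. setsum_elt S z = setsum_elt S w) \<longleftrightarrow> (\<forall>z\<in>A. z \<in> S \<longrightarrow> A \<subseteq> S)" for A
    unfolding setsum_elt_def by auto
  moreover have "\<forall>z. z \<notin> carrier G \<longrightarrow> setsum_elt S z = 0"
    using assms unfolding setsum_elt_def by auto
  ultimately show ?thesis unfolding zspan_iff by simp
qed

lemma block_in_zspan: "A \<in> P \<Longrightarrow> setsum_elt A \<in> zspan P"
  by (subst indicator_in_zspan_iff[OF block_subset]) (use block_unique in blast)+

lemma partition_eqI:
  assumes "block_partition G Q"
    and "\<And>z w. z \<in> carrier G \<Longrightarrow> same_block P z w \<longleftrightarrow> same_block Q z w"
  shows "P = Q"
proof -
  have "P = (\<lambda>z. {w. same_block P z w}) ` carrier G" by (rule partition_eq_same_blocks)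
  also have "\<dots> = (\<lambda>z. {w. same_block Q z w}) ` carrier G"
    using assms(2) by (intro image_cong) auto
  also have "\<dots> = Q" by (rule block_partition.partition_eq_same_blocks[OF assms(1), symmetric])
  finally show ?thesis .
qed

lemma same_block_trans: "same_block P z w \<Longrightarrow> same_block P w v \<Longrightarrow> same_block P z v"
  unfolding same_block_def using block_unique by blast

end

lemma (in block_partition) struct_const_at:
  assumes unital: "unital_partition G P" and ABC: "A \<in> P" "B \<in> P" "C \<in> P" "z \<in> C"
  shows "struct_const G P A B C = gr_mult G (setsum_elt A) (setsum_elt B) z"
proof -
  define F where "F = gr_mult G (setsum_elt A) (setsum_elt B)"
  have "F \<in> zspan P"
    using unital block_in_zspan ABC unfolding F_def unital_partition_def by blast
  then obtain c where c: "F = lincomb P c" by (auto simp: zspan_def)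
  have "(THE n. \<exists>c. F = lincomb P c \<and> c C = n) = F z"
  proof (rule the_equality)
    show "\<exists>c. F = lincomb P c \<and> c C = F z"
      using c lincomb_at_block[OF ABC(3,4)] by auto
  next
    fix n assume "\<exists>c. F = lincomb P c \<and> c C = n"
    then show "n = F z" using lincomb_at_block[OF ABC(3,4)] by auto
  qed
  then show ?thesis unfolding struct_const_def F_def .
qed

text \<open>The pairs \<open>(y, z) \<in> A \<times> C\<close> with \<open>y\<^sup>-\<^sup>1 z \<in> B\<close>, i.e. the solutions of \<open>y b = z\<close>;
  the fusion identity is a double count of this set.\<close>
definition solutions :: "('a, 'b) monoid_scheme \<Rightarrow> 'a set \<Rightarrow> 'a set \<Rightarrow> 'a set \<Rightarrow> ('a \<times> 'a) set" where
  "solutions G A B C = {(y, z). y \<in> A \<and> z \<in> C \<and> inv\<^bsub>G\<^esub> y \<otimes>\<^bsub>G\<^esub> z \<in> B}"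

lemma gr_mult_indicators:
  assumes "finite (carrier G)" "A \<subseteq> carrier G" "z \<in> carrier G"
  shows "gr_mult G (setsum_elt A) (setsum_elt B) z = int (card {y \<in> A. inv\<^bsub>G\<^esub> y \<otimes>\<^bsub>G\<^esub> z \<in> B})"
proof -
  have "gr_mult G (setsum_elt A) (setsum_elt B) z
      = (\<Sum>y\<in>carrier G. setsum_elt A y * setsum_elt B (inv\<^bsub>G\<^esub> y \<otimes>\<^bsub>G\<^esub> z))"
    using assms(3) by (simp add: gr_mult_def)
  also have "\<dots> = (\<Sum>y\<in>carrier G. if y \<in> {y \<in> A. inv\<^bsub>G\<^esub> y \<otimes>\<^bsub>G\<^esub> z \<in> B} then 1 else 0)"
    by (intro sum.cong) (auto simp: setsum_elt_def)
  also have "\<dots> = int (card {y \<in> A. inv\<^bsub>G\<^esub> y \<otimes>\<^bsub>G\<^esub> z \<in> B})"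
    using assms(1,2) by (subst sum.If_cases) (auto simp: Int_absorb1 subset_iff)
  finally show ?thesis .
qed

lemma (in block_partition) struct_const_card:
  assumes "unital_partition G P" "A \<in> P" "B \<in> P" "C \<in> P"
  shows "struct_const G P A B C * int (card C) = int (card (solutions G A B C))"
proof -
  have fin: "finite A" "finite C" using assms finite_block by auto
  have sol: "solutions G A B C = (\<Union>z\<in>C. (\<lambda>y. (y, z)) ` {y \<in> A. inv\<^bsub>G\<^esub> y \<otimes>\<^bsub>G\<^esub> z \<in> B})"
    unfolding solutions_def by auto
  have "card (solutions G A B C) = (\<Sum>z\<in>C. card {y \<in> A. inv\<^bsub>G\<^esub> y \<otimes>\<^bsub>G\<^esub> z \<in> B})"
  proof -
    have "card (\<Union>z\<in>C. (\<lambda>y. (y, z)) ` {y \<in> A. inv\<^bsub>G\<^esub> y \<otimes>\<^bsub>G\<^esub> z \<in> B})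
        = (\<Sum>z\<in>C. card ((\<lambda>y. (y, z)) ` {y \<in> A. inv\<^bsub>G\<^esub> y \<otimes>\<^bsub>G\<^esub> z \<in> B}))"
      using fin by (intro card_UN_disjoint) auto
    then show ?thesis
      unfolding sol by (simp add: card_image inj_on_def)
  qed
  also have "int \<dots> = (\<Sum>z\<in>C. struct_const G P A B C)"
    unfolding of_nat_sum
  proof (intro sum.cong refl)
    fix z assume "z \<in> C"
    then have "struct_const G P A B C = gr_mult G (setsum_elt A) (setsum_elt B) z"
      using struct_const_at assms by blast
    also have "\<dots> = int (card {y \<in> A. inv\<^bsub>G\<^esub> y \<otimes>\<^bsub>G\<^esub> z \<in> B})"
      using gr_mult_indicators[OF finite_carrier] block_subset assms \<open>z \<in> C\<close> by blast
    finally show "int (card {y \<in> A. inv\<^bsub>G\<^esub> y \<otimes>\<^bsub>G\<^esub> z \<in> B}) = struct_const G P A B C" by simp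
  qed
  finally show ?thesis by simp
qed

lemma (in group) mem_inv_set:
  assumes "B \<subseteq> carrier G"
  shows "w \<in> inv_set G B \<longleftrightarrow> w \<in> carrier G \<and> inv w \<in> B"
proof
  assume "w \<in> inv_set G B"
  then obtain b where "b \<in> B" "w = inv b" unfolding inv_set_def by blast
  then show "w \<in> carrier G \<and> inv w \<in> B" using assms by auto
next
  assume "w \<in> carrier G \<and> inv w \<in> B"
  then have "w = inv (inv w)" "inv w \<in> B" by simp_all
  then show "w \<in> inv_set G B" unfolding inv_set_def by blast
qed

lemma (in group) inv_set_inv_set: "B \<subseteq> carrier G \<Longrightarrow> inv_set G (inv_set G B) = B"
  unfolding inv_set_def by (force simp: image_image subset_iff)

lemma (in comm_group) solutions_inv_image:
  assumes "A \<subseteq> carrier G" "B \<subseteq> carrier G" "C \<subseteq> carrier G"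
  shows "(\<lambda>(y, z). (y, inv z \<otimes> y)) ` solutions G A B C \<subseteq> solutions G A (inv_set G C) (inv_set G B)"
proof clarify
  fix y z assume "(y, z) \<in> solutions G A B C"
  then have yz: "y \<in> A" "z \<in> C" "inv y \<otimes> z \<in> B" and carr: "y \<in> carrier G" "z \<in> carrier G"
    using assms unfolding solutions_def by auto
  have "inv (inv z \<otimes> y) = inv y \<otimes> z" using carr by (simp add: inv_mult_group)
  then have "inv z \<otimes> y \<in> inv_set G B" using yz carr mem_inv_set[OF assms(2)] by simp
  moreover have "inv y \<otimes> (inv z \<otimes> y) = inv z" using carr by (simp add: m_lcomm[of "inv y" "inv z" y])
  then have "inv y \<otimes> (inv z \<otimes> y) \<in> inv_set G C" using yz carr mem_inv_set[OF assms(3)] by simp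
  ultimately show "(y, inv z \<otimes> y) \<in> solutions G A (inv_set G C) (inv_set G B)"
    using yz unfolding solutions_def by simp
qed

lemma (in comm_group) card_solutions_inv:
  assumes "A \<subseteq> carrier G" "B \<subseteq> carrier G" "C \<subseteq> carrier G"
  shows "card (solutions G A B C) = card (solutions G A (inv_set G C) (inv_set G B))"
proof (rule bij_betw_same_card, rule bij_betw_byWitness)
  let ?f = "\<lambda>(y, z). (y, inv z \<otimes> y)"
  have "inv (inv z \<otimes> y) \<otimes> y = z" if "y \<in> carrier G" "z \<in> carrier G" for y z
    using that by (simp add: inv_mult_group m_comm[of "inv y" z] m_assoc)
  then have invol: "?f (?f a) = a" if "a \<in> carrier G \<times> carrier G" for a
    using that by auto
  have sub: "solutions G A' B' C' \<subseteq> carrier G \<times> carrier G" if "A' \<subseteq> carrier G" "C' \<subseteq> carrier G"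
    for A' B' C' using that unfolding solutions_def by auto
  have invB: "inv_set G B \<subseteq> carrier G" and invC: "inv_set G C \<subseteq> carrier G"
    using assms by (auto simp: inv_set_def)
  show "?f ` solutions G A B C \<subseteq> solutions G A (inv_set G C) (inv_set G B)"
    by (rule solutions_inv_image[OF assms])
  show "?f ` solutions G A (inv_set G C) (inv_set G B) \<subseteq> solutions G A B C"
    using solutions_inv_image[OF assms(1) invC invB]
    unfolding inv_set_inv_set[OF assms(2)] inv_set_inv_set[OF assms(3)] .
  show "\<forall>a\<in>solutions G A B C. ?f (?f a) = a"
    using invol sub[OF assms(1,3)] by (meson subsetD)
  show "\<forall>a\<in>solutions G A (inv_set G C) (inv_set G B). ?f (?f a) = a"
    using invol sub[OF assms(1) invB] by (meson subsetD)
qed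

theorem fusion_partitionI:
  assumes "comm_group G" "finite (carrier G)" "unital_partition G P"
    and inv_blocks: "\<And>A. A \<in> P \<Longrightarrow> inv_set G A \<in> P"
  shows "fusion_partition G P"
proof -
  interpret comm_group G by fact
  interpret block_partition G P
    using assms unfolding block_partition_def unital_partition_def by blast
  have "struct_const G P A B C * int (card C)
      = struct_const G P A (inv_set G C) (inv_set G B) * int (card (inv_set G B))"
    if ABC: "A \<in> P" "B \<in> P" "C \<in> P" for A B C
  proof -
    have "struct_const G P A B C * int (card C) = int (card (solutions G A B C))"
      using struct_const_card[OF assms(3) ABC] .
    also have "\<dots> = int (card (solutions G A (inv_set G C) (inv_set G B)))"
      using card_solutions_inv[OF block_subset[OF ABC(1)] block_subset[OF ABC(2)] block_subset[OF ABC(3)]]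
      by (rule arg_cong)
    also have "\<dots> = struct_const G P A (inv_set G C) (inv_set G B) * int (card (inv_set G B))"
      using struct_const_card[OF assms(3) ABC(1) inv_blocks[OF ABC(3)] inv_blocks[OF ABC(2)]] by simp
    finally show ?thesis .
  qed
  with assms(3) inv_blocks show ?thesis unfolding fusion_partition_def by blast
qed

lemma (in group) gr_mult_automorphism_invariant:
  assumes \<sigma>: "\<sigma> \<in> iso G G"
    and f: "\<And>y. y \<in> carrier G \<Longrightarrow> f (\<sigma> y) = f y"
    and g: "\<And>y. y \<in> carrier G \<Longrightarrow> g (\<sigma> y) = g y"
    and z: "z \<in> carrier G"
  shows "gr_mult G f g (\<sigma> z) = gr_mult G f g z"
proof -
  interpret group_hom G G \<sigma>
    using \<sigma> by (simp add: group_hom_def group_hom_axioms_def iso_imp_homomorphism is_group)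
  have bij: "bij_betw \<sigma> (carrier G) (carrier G)" using \<sigma> by (simp add: iso_def)
  have "gr_mult G f g (\<sigma> z) = (\<Sum>y\<in>carrier G. f (\<sigma> y) * g (inv (\<sigma> y) \<otimes> \<sigma> z))"
    using z sum.reindex_bij_betw[OF bij, of "\<lambda>y. f y * g (inv y \<otimes> \<sigma> z)"]
    by (simp add: gr_mult_def)
  also have "\<dots> = (\<Sum>y\<in>carrier G. f y * g (inv y \<otimes> z))"
    using z f g by (intro sum.cong) (simp_all flip: hom_mult hom_inv)
  also have "\<dots> = gr_mult G f g z" using z by (simp add: gr_mult_def)
  finally show ?thesis .
qed

lemma binomial_power_prime:
  fixes a b :: "'a::comm_ring_1"
  assumes q: "Factorial_Ring.prime (q::nat)"
  shows "\<exists>d. (a + b) ^ q = a ^ q + b ^ q + of_nat q * d"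
proof -
  have q0: "q > 0" using q prime_gt_0_nat by blast
  have middle: "of_nat (q choose k) = of_nat q * (of_nat ((q choose k) div q) :: 'a)"
    if "k \<in> {0<..<q}" for k
    using dvd_choose_prime[of k q] that q by (simp flip: of_nat_mult)
  have "(a + b) ^ q = (\<Sum>k\<in>insert 0 (insert q {0<..<q}). of_nat (q choose k) * a ^ k * b ^ (q - k))"
    unfolding binomial_ring using q0 by (intro sum.cong) auto
  also have "\<dots> = b ^ q + a ^ q + of_nat q * (\<Sum>k\<in>{0<..<q}. of_nat ((q choose k) div q) * a ^ k * b ^ (q - k))"
    using q0 by (simp add: middle sum_distrib_left mult.assoc)
  finally show ?thesis by (auto simp: add_ac)
qed

lemma sum_power_prime:
  fixes f :: "'b \<Rightarrow> 'a::comm_ring_1"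
  assumes q: "Factorial_Ring.prime (q::nat)" and "finite T"
  shows "\<exists>c. (\<Sum>t\<in>T. f t) ^ q = (\<Sum>t\<in>T. f t ^ q) + of_nat q * c"
  using \<open>finite T\<close>
proof (induction T rule: finite_induct)
  case empty
  then show ?case using q prime_gt_0_nat by (intro exI[of _ 0]) (simp add: power_0_left)
next
  case (insert t T)
  then obtain c where "(\<Sum>t\<in>T. f t) ^ q = (\<Sum>t\<in>T. f t ^ q) + of_nat q * c" by blast
  moreover obtain d where "(f t + (\<Sum>t\<in>T. f t)) ^ q = f t ^ q + (\<Sum>t\<in>T. f t) ^ q + of_nat q * d"
    using binomial_power_prime[OF q] by blast
  ultimately show ?case using insert by (intro exI[of _ "c + d"]) (simp add: algebra_simps)
qed

lemma reach_by_multiples: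
  fixes e f u n :: nat
  assumes "u dvd n" "0 < n" "e mod u = f mod u"
  shows "\<exists>k. (e + u * k) mod n = f mod n"
proof -
  obtain w where w: "n = u * Suc w" using assms(1,2) by (metis dvdE mult_0_right not0_implies_Suc less_irrefl)
  define E F r where "E = e div u" and "F = f div u" and "r = e mod u"
  have e: "e = u * E + r" unfolding E_def r_def by simp
  have f: "f = u * F + r" unfolding F_def r_def using assms(3) by simp
  have "e + u * (F + w * E) = f + n * E" unfolding e f w by (simp add: algebra_simps)
  then have "(e + u * (F + w * E)) mod n = f mod n" by simp
  then show ?thesis by blast
qed

lemma periodic_additive_set:
  fixes H :: "nat \<Rightarrow> bool" and n :: nat
  assumes "0 < n" "H 0" and add: "\<And>e f. H e \<Longrightarrow> H f \<Longrightarrow> H (e + f)"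
    and periodic: "\<And>e. H e \<longleftrightarrow> H (e mod n)"
  shows "\<exists>u. u dvd n \<and> (\<forall>e. H e \<longleftrightarrow> u dvd e)"
proof -
  have Hn: "H n" using periodic[of n] assms(2) by simp
  define u where "u = (LEAST e. 0 < e \<and> H e)"
  have u: "0 < u" "H u" and "u \<le> n"
    using LeastI[of "\<lambda>e. 0 < e \<and> H e" n] Least_le[of "\<lambda>e. 0 < e \<and> H e" n] Hn assms(1)
    unfolding u_def by auto
  have mult: "H (u * k)" for k
    by (induction k) (use assms(2) add u(2) in \<open>simp_all add: add.commute\<close>)
  have "H e \<longleftrightarrow> u dvd e" for e
  proof
    assume He: "H e"
    define k t where "k = e div u" and "t = e mod u"
    obtain m where m: "n = Suc m" using assms(1) by (cases n) auto
    have "H (e + u * (m * k))" using add[OF He mult] .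
    moreover have "e + u * (m * k) = t + (u * k) * n"
      unfolding m k_def t_def by (simp add: algebra_simps)
    ultimately have "H t" using periodic[of "t + (u * k) * n"] periodic[of t] \<open>u \<le> n\<close> u(1)
      unfolding t_def by simp
    then have "t = 0" using not_less_Least[of t "\<lambda>e. 0 < e \<and> H e"] u(1)
      unfolding t_def u_def[symmetric] by auto
    then show "u dvd e" unfolding t_def by (simp add: mod_eq_0_iff_dvd)
  next
    assume "u dvd e"
    then show "H e" using mult by auto
  qed
  then show ?thesis using Hn by blast
qed

lemma mu_simps [simp]:
  "carrier (mu p) = {z. z ^ p = 1}" "monoid.mult (mu p) = (*)" "one (mu p) = 1"
  by (simp_all add: mu_def)

lemma mu_nat_pow [simp]: "z [^]\<^bsub>mu p\<^esub> (n::nat) = z ^ n"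
  by (induction n) (simp_all add: mu_def)

lemma mu_comm_group: "p > 0 \<Longrightarrow> comm_group (mu p)"
proof (rule comm_groupI)
  fix z assume "p > 0" "z \<in> carrier (mu p)"
  moreover from this have "z \<noteq> 0" by (auto simp: power_0_left)
  ultimately show "\<exists>y\<in>carrier (mu p). y \<otimes>\<^bsub>mu p\<^esub> z = \<one>\<^bsub>mu p\<^esub>"
    by (intro bexI[of _ "inverse z"]) (auto simp: power_inverse)
qed (auto simp: power_mult_distrib)

lemma mu_inv:
  assumes "p > 0" "z \<in> carrier (mu p)" shows "inv\<^bsub>mu p\<^esub> z = inverse z"
proof -
  have "z \<noteq> 0" using assms by (auto simp: power_0_left)
  then show ?thesis using assms
    by (intro group.inv_equality[OF comm_group.axioms(2)[OF mu_comm_group]]) (auto simp: power_inverse)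
qed

lemma nontrivial_root_of_unity:
  assumes "p \<ge> 2" shows "\<exists>z. z ^ p = (1::complex) \<and> z \<noteq> 1"
proof -
  define z where "z = cis (2 * pi / p)"
  have "z ^ p = 1" using assms by (simp add: z_def DeMoivre)
  moreover have "cos (2 * pi / p) < 1"
    using assms cos_monotone_0_pi[of 0 "2 * pi / p"] by (simp add: field_simps)
  then have "z \<noteq> 1" by (auto simp: z_def cis.ctr complex_eq_iff)
  ultimately show ?thesis by blast
qed

locale roots_of_unity =
  fixes p :: nat and x :: complex
  assumes prime_p: "Factorial_Ring.prime p"
    and x_root: "x ^ p = 1"
    and generator: "{z. z ^ p = 1} = range (\<lambda>n. x ^ n)"
begin

abbreviation roots :: "complex set" where "roots \<equiv> {z. z ^ p = 1}"

lemma p_gt_1: "p > 1" using prime_p prime_gt_1_nat by blast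

lemma comm_group_mu: "comm_group (mu p)" using mu_comm_group p_gt_1 by simp

lemma roots_nonzero: "z \<in> roots \<Longrightarrow> z \<noteq> 0"
  using p_gt_1 by (auto simp: power_0_left)

lemma power_in_roots [simp]: "(z::complex) ^ p = 1 \<Longrightarrow> (z ^ m) ^ p = 1"
proof -
  assume "z ^ p = 1"
  have "(z ^ m) ^ p = (z ^ p) ^ m" by (simp flip: power_mult add: mult.commute)
  then show ?thesis using \<open>z ^ p = 1\<close> by simp
qed

lemma x_ne_1: "x \<noteq> 1"
proof
  assume "x = 1"
  obtain z where "z \<in> roots" "z \<noteq> 1" using nontrivial_root_of_unity[of p] p_gt_1 by auto
  moreover have "z \<in> range (\<lambda>n. x ^ n)" using \<open>z \<in> roots\<close> generator by blast
  ultimately show False using \<open>x = 1\<close> by auto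
qed

lemma ord_x: "group.ord (mu p) x = p"
proof -
  interpret comm_group "mu p" by (rule comm_group_mu)
  have x: "x \<in> carrier (mu p)" using x_root by simp
  have "ord x dvd p" using pow_eq_id[OF x, of p] x_root by simp
  moreover have "ord x \<noteq> 1" using pow_eq_id[OF x, of 1] x_ne_1 by auto
  ultimately show ?thesis using prime_p prime_nat_iff by blast
qed

lemma x_power_eq_1_iff: "x ^ k = 1 \<longleftrightarrow> p dvd k"
proof -
  interpret comm_group "mu p" by (rule comm_group_mu)
  have x: "x \<in> carrier (mu p)" using x_root by simp
  show ?thesis using pow_eq_id[OF x, of k] unfolding ord_x by simp
qed

lemma x_power_eq_iff: "x ^ m = x ^ n \<longleftrightarrow> m mod p = n mod p"
proof -
  have x0: "x \<noteq> 0" using roots_nonzero x_root by simp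
  have "x ^ m = x ^ n \<longleftrightarrow> m mod p = n mod p" if "m \<le> n" for m n
  proof -
    have "x ^ n = x ^ m * x ^ (n - m)" using that by (simp flip: power_add)
    then have "x ^ m = x ^ n \<longleftrightarrow> x ^ (n - m) = 1" using x0 by auto
    also have "\<dots> \<longleftrightarrow> p dvd (n - m)" by (rule x_power_eq_1_iff)
    also have "\<dots> \<longleftrightarrow> m mod p = n mod p" using that by (metis mod_eq_dvd_iff_nat)
    finally show ?thesis .
  qed
  from this[of m n] this[of n m] show ?thesis by (cases "m \<le> n") auto
qed

lemma power_mod_p: "z \<in> roots \<Longrightarrow> z ^ n = z ^ (n mod p)"
proof -
  assume "z \<in> roots"
  have "z ^ n = (z ^ p) ^ (n div p) * z ^ (n mod p)"
    by (metis mult_div_mod_eq power_add power_mult)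
  then show ?thesis using \<open>z \<in> roots\<close> by simp
qed

lemma roots_image: "roots = (\<lambda>n. x ^ n) ` {..<p}"
proof -
  have "x ^ n \<in> (\<lambda>n. x ^ n) ` {..<p}" for n
    using power_mod_p[of x n] x_root p_gt_1 by auto
  then show ?thesis using generator by auto
qed

lemma finite_roots: "finite roots" using roots_image by simp

lemma card_roots: "card roots = p"
proof -
  have "inj_on (\<lambda>n. x ^ n) {..<p}" by (auto simp: inj_on_def x_power_eq_iff)
  then show ?thesis using roots_image by (simp add: card_image)
qed

lemma int_power_x: "x [^]\<^bsub>mu p\<^esub> (k::int) = x ^ nat (k mod int p)"
proof -
  interpret comm_group "mu p" by (rule comm_group_mu)
  have x: "x \<in> carrier (mu p)" using x_root by simp
  have "x [^]\<^bsub>mu p\<^esub> k = x [^]\<^bsub>mu p\<^esub> (int (nat (k mod int p)))"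
    unfolding int_pow_eq[OF x] ord_x using p_gt_1 by (simp add: mod_eq_dvd_iff[symmetric])
  also have "\<dots> = x ^ nat (k mod int p)" by (simp only: int_pow_int mu_nat_pow)
  finally show ?thesis .
qed

lemma gr_mult_mu:
  "gr_mult (mu p) f g z = (if z \<in> roots then \<Sum>y\<in>roots. f y * g (z / y) else 0)"
proof -
  have "inv\<^bsub>mu p\<^esub> y \<otimes>\<^bsub>mu p\<^esub> z = z / y" if "y \<in> roots" for y
    using mu_inv[of p y] p_gt_1 that by (simp add: divide_inverse mult.commute)
  then show ?thesis unfolding gr_mult_def by (auto intro!: sum.cong)
qed

text \<open>Raising to a power \<open>m\<close> prime to \<open>p\<close> is an automorphism of \<open>\<mu>\<^sub>p\<close>; its inverse is
  raising to the power \<open>m\<^sup>p\<^sup>-\<^sup>2\<close>, by Fermat's little theorem.\<close>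
lemma power_inverse_exponent:
  assumes "\<not> p dvd m" "z \<in> roots"
  shows "(z ^ m) ^ (m ^ (p - 2)) = z" "(z ^ (m ^ (p - 2))) ^ m = z"
proof -
  have "m * m ^ (p - 2) = m ^ (p - 1)"
    using p_gt_1 by (simp flip: power_Suc add: Suc_diff_Suc numeral_2_eq_2)
  moreover have "m ^ (p - 1) mod p = 1"
    using fermat_theorem[OF prime_p assms(1)] p_gt_1 by (simp add: cong_def)
  ultimately have "z ^ (m * m ^ (p - 2)) = z"
    using power_mod_p[OF assms(2), of "m ^ (p - 1)"] by simp
  then show "(z ^ m) ^ (m ^ (p - 2)) = z" "(z ^ (m ^ (p - 2))) ^ m = z"
    by (simp_all flip: power_mult add: mult.commute)
qed

lemma power_bij: "\<not> p dvd m \<Longrightarrow> bij_betw (\<lambda>z. z ^ m) roots roots"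
  by (rule bij_betw_byWitness[where f' = "\<lambda>z. z ^ (m ^ (p - 2))"])
     (auto simp: power_inverse_exponent power_in_roots)

lemma power_iso: "\<not> p dvd m \<Longrightarrow> (\<lambda>z. z ^ m) \<in> iso (mu p) (mu p)"
  by (rule isoI) (auto simp: hom_def power_in_roots power_mult_distrib power_bij)

lemma inverse_as_power: "z \<in> roots \<Longrightarrow> inverse z = z ^ (p - 1)"
proof -
  assume "z \<in> roots"
  moreover have "p = Suc (p - 1)" using p_gt_1 by simp
  ultimately have "z * z ^ (p - 1) = 1" by (metis mem_Collect_eq power_Suc)
  then show ?thesis by (rule inverse_unique)
qed

text \<open>The ring homomorphism \<open>\<int>[X] \<rightarrow> \<int>[\<mu>\<^sub>p]\<close>, \<open>X \<mapsto> x\<close>; it lets us compute powers of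
  elements of the group ring inside the polynomial ring.\<close>
definition poly_to_gr :: "int poly \<Rightarrow> complex \<Rightarrow> int" where
  "poly_to_gr P z = (\<Sum>n\<le>degree P. coeff P n * (if z = x ^ n then 1 else 0))"

lemma poly_to_gr_bound:
  "degree P \<le> N \<Longrightarrow> poly_to_gr P z = (\<Sum>n\<le>N. coeff P n * (if z = x ^ n then 1 else 0))"
  unfolding poly_to_gr_def by (intro sum.mono_neutral_left) (auto simp: coeff_eq_0)

lemma poly_to_gr_add: "poly_to_gr (P + Q) z = poly_to_gr P z + poly_to_gr Q z"
proof -
  define N where "N = max (degree P) (degree Q)"
  have "degree (P + Q) \<le> N" "degree P \<le> N" "degree Q \<le> N"
    unfolding N_def using degree_add_le_max[of P Q] by auto
  then show ?thesis by (simp add: poly_to_gr_bound[of _ N] algebra_simps sum.distrib)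
qed

lemma poly_to_gr_sum: "finite T \<Longrightarrow> poly_to_gr (\<Sum>t\<in>T. F t) z = (\<Sum>t\<in>T. poly_to_gr (F t) z)"
proof (induction T rule: finite_induct)
  case empty
  then show ?case by (simp add: poly_to_gr_def)
qed (simp add: poly_to_gr_add)

lemma poly_to_gr_monom: "poly_to_gr (monom c n) z = c * (if z = x ^ n then 1 else 0)"
proof -
  have "poly_to_gr (monom c n) z = (\<Sum>k\<le>n. coeff (monom c n) k * (if z = x ^ k then 1 else 0))"
    by (rule poly_to_gr_bound) (simp add: degree_monom_le)
  also have "\<dots> = c * (if z = x ^ n then 1 else 0)"
    by (simp add: coeff_monom if_distrib[of "\<lambda>a. a * _"] cong: if_cong)
  finally show ?thesis .
qed

lemma poly_to_gr_scale: "poly_to_gr (of_nat q * Q) z = int q * poly_to_gr Q z"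
proof -
  have "degree (of_nat q * Q) \<le> degree Q" using degree_mult_le[of "of_nat q" Q] by simp
  then show ?thesis
    by (simp add: poly_to_gr_bound[of _ "degree Q"] poly_to_gr_def of_nat_poly sum_distrib_left mult.assoc)
qed

lemma poly_to_gr_outside: "z \<notin> roots \<Longrightarrow> poly_to_gr P z = 0"
  unfolding poly_to_gr_def using x_root by (intro sum.neutral) auto

lemma point_convolution:
  "(\<Sum>y\<in>roots. (if y = x ^ i then 1 else 0) * (if z / y = x ^ j then 1 else 0 :: int))
    = (if z = x ^ (i + j) then 1 else 0)"
proof -
  have x0: "x \<noteq> 0" using roots_nonzero x_root by simp
  have "(\<Sum>y\<in>roots. (if y = x ^ i then 1 else 0) * (if z / y = x ^ j then 1 else 0 :: int))
      = (\<Sum>y\<in>roots. if y = x ^ i then (if z / x ^ i = x ^ j then 1 else 0) else 0)"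
    by (intro sum.cong) auto
  also have "\<dots> = (if z / x ^ i = x ^ j then 1 else 0)"
    using finite_roots x_root by (simp add: sum.delta')
  also have "(z / x ^ i = x ^ j) \<longleftrightarrow> (z = x ^ (i + j))"
    using x0 by (auto simp: power_add field_simps)
  finally show ?thesis .
qed

lemma poly_to_gr_mult: "poly_to_gr (P * Q) = gr_mult (mu p) (poly_to_gr P) (poly_to_gr Q)"
proof
  fix z
  show "poly_to_gr (P * Q) z = gr_mult (mu p) (poly_to_gr P) (poly_to_gr Q) z"
  proof (cases "z \<in> roots")
    case False
    then show ?thesis by (simp add: gr_mult_mu poly_to_gr_outside)
  next
    case True
    define N where "N = degree P + degree Q"
    have finN: "finite {(i, j). i + j \<le> N}"
      by (rule finite_subset[of _ "{..N} \<times> {..N}"]) auto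
    define h where "h i j = coeff P i * coeff Q j * (if z = x ^ (i + j) then 1 else 0 :: int)" for i j
    have "gr_mult (mu p) (poly_to_gr P) (poly_to_gr Q) z
        = (\<Sum>y\<in>roots. \<Sum>i\<le>degree P. \<Sum>j\<le>degree Q. coeff P i * coeff Q j *
             ((if y = x ^ i then 1 else 0) * (if z / y = x ^ j then 1 else 0)))"
      using True unfolding gr_mult_mu poly_to_gr_def by (simp add: sum_product algebra_simps)
    also have "\<dots> = (\<Sum>i\<le>degree P. \<Sum>j\<le>degree Q. coeff P i * coeff Q j *
             (\<Sum>y\<in>roots. (if y = x ^ i then 1 else 0) * (if z / y = x ^ j then 1 else 0)))"
      by (simp add: sum.swap[of _ roots] sum.swap[of _ roots "{..degree Q}"] sum_distrib_left)
    also have "\<dots> = (\<Sum>(i, j)\<in>{(i, j). i + j \<le> N}. h i j)"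
      unfolding point_convolution sum.cartesian_product h_def[symmetric]
      by (rule sum.mono_neutral_left) (use finN in \<open>auto simp: N_def h_def coeff_eq_0\<close>)
    also have "\<dots> = (\<Sum>k\<le>N. \<Sum>i\<le>k. h i (k - i))"
      by (rule sum.triangle_reindex_eq)
    also have "\<dots> = poly_to_gr (P * Q) z"
      using degree_mult_le[of P Q] unfolding N_def h_def
      by (simp add: poly_to_gr_bound coeff_mult sum_distrib_right)
    finally show ?thesis by simp
  qed
qed

lemma exponent_function: "\<exists>e. \<forall>t\<in>roots. x ^ e t = t"
proof -
  have "\<exists>n. t = x ^ n" if "t \<in> roots" for t using that generator by auto
  then show ?thesis by metis
qed

lemma indicator_power_congruence:
  assumes q: "Factorial_Ring.prime q" "\<not> p dvd q" and S: "S \<subseteq> roots"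
  shows "\<exists>A c. poly_to_gr A = setsum_elt S \<and>
    (\<forall>z. poly_to_gr (A ^ q) z = setsum_elt ((\<lambda>z. z ^ q) ` S) z + int q * poly_to_gr c z)"
proof -
  obtain e where e: "\<And>t. t \<in> S \<Longrightarrow> x ^ e t = t"
    using exponent_function S by blast
  have finS: "finite S" using S finite_roots finite_subset by blast
  define A where "A = (\<Sum>t\<in>S. monom (1::int) (e t))"
  have A: "poly_to_gr A = setsum_elt S"
    using finS e by (auto simp: A_def poly_to_gr_sum poly_to_gr_monom setsum_elt_def fun_eq_iff)
  obtain c where c: "A ^ q = (\<Sum>t\<in>S. monom 1 (e t) ^ q) + of_nat q * c"
    unfolding A_def using sum_power_prime[OF q(1) finS] by blast
  define Sq where "Sq = (\<lambda>z. z ^ q) ` S"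
  have inj: "inj_on (\<lambda>z. z ^ q) S"
    using power_bij[OF q(2)] S bij_betw_imp_inj_on inj_on_subset by blast
  have "poly_to_gr (A ^ q) z = setsum_elt Sq z + int q * poly_to_gr c z" for z
  proof -
    have "poly_to_gr (\<Sum>t\<in>S. monom 1 (e t) ^ q) z = (\<Sum>t\<in>S. if z = t ^ q then 1 else 0)"
      using finS e by (simp add: poly_to_gr_sum monom_power poly_to_gr_monom power_mult)
    also have "\<dots> = (\<Sum>w\<in>Sq. if z = w then 1 else 0)"
      unfolding Sq_def by (subst sum.reindex[OF inj]) (simp add: comp_def)
    also have "\<dots> = setsum_elt Sq z"
      using finS unfolding Sq_def by (simp add: setsum_elt_def)
    finally show ?thesis using c by (simp add: poly_to_gr_add poly_to_gr_scale)
  qed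
  then show ?thesis using A unfolding Sq_def by blast
qed
end

locale roots_partition = roots_of_unity +
  fixes P :: "complex set set"
  assumes unital: "unital_partition (mu p) P"

sublocale roots_partition \<subseteq> block_partition "mu p" P
  using unital finite_roots by unfold_locales (simp_all add: unital_partition_def)

context roots_partition
begin

lemma zspan_mult: "f \<in> zspan P \<Longrightarrow> g \<in> zspan P \<Longrightarrow> gr_mult (mu p) f g \<in> zspan P"
  using unital by (simp add: unital_partition_def)

lemma poly_power_in_zspan: "poly_to_gr A \<in> zspan P \<Longrightarrow> poly_to_gr (A ^ n) \<in> zspan P"
proof (induction n)
  case 0
  have "poly_to_gr 1 = setsum_elt {1}"
    using poly_to_gr_monom[of 1 0] by (auto simp: setsum_elt_def monom_eq_1 fun_eq_iff)
  then show ?case using block_in_zspan[OF unit_block] by simp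
next
  case (Suc n)
  then show ?case by (simp add: poly_to_gr_mult zspan_mult)
qed

text \<open>Schur's multiplier argument for a prime \<open>q \<noteq> p\<close>: if \<open>S\<close> is a union of blocks then
  so is \<open>S\<^sup>(\<^sup>q\<^sup>) = {s\<^sup>q | s \<in> S}\<close>, because \<open>a\<^sub>S\<^sup>q \<equiv> a\<^bsub>S\<^sup>(\<^sup>q\<^sup>)\<^esub> (mod q)\<close> is constant on blocks while
  \<open>a\<^bsub>S\<^sup>(\<^sup>q\<^sup>)\<^esub>\<close> takes only the values 0 and 1.\<close>
lemma prime_power_image_in_zspan:
  assumes q: "Factorial_Ring.prime q" "\<not> p dvd q"
    and S: "S \<subseteq> roots" "setsum_elt S \<in> zspan P"
  shows "setsum_elt ((\<lambda>z. z ^ q) ` S) \<in> zspan P"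
proof -
  define Sq where "Sq = (\<lambda>z. z ^ q) ` S"
  obtain A c where A: "poly_to_gr A = setsum_elt S"
    and Aq: "\<And>z. poly_to_gr (A ^ q) z = setsum_elt Sq z + int q * poly_to_gr c z"
    using indicator_power_congruence[OF q S(1)] unfolding Sq_def by blast
  have Aq_span: "poly_to_gr (A ^ q) \<in> zspan P" using poly_power_in_zspan A S(2) by simp
  have Sq_roots: "Sq \<subseteq> roots" unfolding Sq_def using S(1) by auto
  have q1: "int q > 1" using q(1) prime_gt_1_nat by auto
  show ?thesis
    unfolding Sq_def[symmetric] indicator_in_zspan_iff[OF Sq_roots[folded mu_simps(1)]]
  proof (intro ballI impI subsetI)
    fix B z w assume B: "B \<in> P" "z \<in> B" "z \<in> Sq" "w \<in> B"
    have "poly_to_gr (A ^ q) z = poly_to_gr (A ^ q) w" using Aq_span B unfolding zspan_iff by blast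
    then have eq: "1 + int q * poly_to_gr c z = setsum_elt Sq w + int q * poly_to_gr c w"
      using Aq[of z] Aq[of w] B(3) by (simp add: setsum_elt_def)
    show "w \<in> Sq"
    proof (rule ccontr)
      assume "w \<notin> Sq"
      with eq have "1 = int q * (poly_to_gr c w - poly_to_gr c z)"
        by (simp add: setsum_elt_def algebra_simps)
      then have "int q dvd 1" by (metis dvd_triv_left)
      then show False using q1 by auto
    qed
  qed
qed

text \<open>By induction on the prime factorisation, the same holds for every exponent prime to \<open>p\<close>.\<close>
lemma power_image_in_zspan:
  "\<not> p dvd m \<Longrightarrow> S \<subseteq> roots \<Longrightarrow> setsum_elt S \<in> zspan P
   \<Longrightarrow> setsum_elt ((\<lambda>z. z ^ m) ` S) \<in> zspan P"
proof (induction m arbitrary: S rule: less_induct)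
  case (less m)
  show ?case
  proof (cases "m = 1")
    case True
    then show ?thesis using less.prems by simp
  next
    case False
    have "m \<noteq> 0" using less.prems(1) by (cases "m = 0") auto
    with False obtain q m' where q: "Factorial_Ring.prime q" "m = q * m'"
      using prime_factor_nat by (metis dvdE)
    have "m' < m" using q prime_gt_1_nat \<open>m \<noteq> 0\<close> by auto
    have "\<not> p dvd q" "\<not> p dvd m'" using less.prems(1) q(2) by auto
    have "setsum_elt ((\<lambda>z. z ^ m') ` S) \<in> zspan P"
      using less.IH[OF \<open>m' < m\<close> \<open>\<not> p dvd m'\<close> less.prems(2,3)] .
    moreover have "(\<lambda>z. z ^ m') ` S \<subseteq> roots" using less.prems(2) by auto
    ultimately have "setsum_elt ((\<lambda>z. z ^ q) ` (\<lambda>z. z ^ m') ` S) \<in> zspan P"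
      using prime_power_image_in_zspan[OF q(1) \<open>\<not> p dvd q\<close>] by blast
    moreover have "(\<lambda>z. z ^ q) ` (\<lambda>z. z ^ m') ` S = (\<lambda>z. z ^ m) ` S"
      unfolding image_image q(2) by (simp add: power_mult mult.commute)
    ultimately show ?thesis by simp
  qed
qed

text \<open>Hence every power map \<open>z \<mapsto> z\<^sup>m\<close> with \<open>p \<nmid> m\<close> permutes the blocks: the image of a
  block is a union of blocks, and so is the image of any of those blocks under the inverse
  power map, which lies inside the original block.\<close>
lemma block_power_image:
  assumes T: "T \<in> P" and m: "\<not> p dvd m"
  shows "(\<lambda>z. z ^ m) ` T \<in> P"
proof -
  define m' where "m' = m ^ (p - 2)"
  have m': "\<not> p dvd m'" unfolding m'_def using m prime_p prime_dvd_power by blast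
  have T_roots: "T \<subseteq> roots" using block_subset[OF T] by simp
  define Tm where "Tm = (\<lambda>z. z ^ m) ` T"
  have Tm_roots: "Tm \<subseteq> roots" unfolding Tm_def using T_roots by auto
  obtain z where z: "z \<in> Tm" unfolding Tm_def using block_nonempty[OF T] by blast
  then obtain U where U: "U \<in> P" "z \<in> U" using block_cover Tm_roots by auto
  have U_roots: "U \<subseteq> roots" using block_subset[OF U(1)] by simp
  have "setsum_elt Tm \<in> zspan P"
    unfolding Tm_def using power_image_in_zspan[OF m T_roots block_in_zspan[OF T]] .
  then have UTm: "U \<subseteq> Tm"
    using U z indicator_in_zspan_iff Tm_roots by (metis mu_simps(1))
  define Um where "Um = (\<lambda>z. z ^ m') ` U"
  have UmT: "Um \<subseteq> T"
  proof
    fix w assume "w \<in> Um"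
    then obtain y where y: "y \<in> U" "w = y ^ m'" unfolding Um_def by blast
    then obtain t where t: "t \<in> T" "y = t ^ m" using UTm unfolding Tm_def by blast
    have "w = t" using y t power_inverse_exponent(1)[OF m] T_roots unfolding m'_def by auto
    then show "w \<in> T" using t by simp
  qed
  have "setsum_elt Um \<in> zspan P"
    unfolding Um_def using power_image_in_zspan[OF m' U_roots block_in_zspan[OF U(1)]] .
  moreover have "Um \<inter> T \<noteq> {}" using UmT U(2) unfolding Um_def by auto
  moreover have "Um \<subseteq> roots" using UmT T_roots by blast
  ultimately have "T \<subseteq> Um" using T indicator_in_zspan_iff by (metis disjoint_iff mu_simps(1))
  then have "T = Um" using UmT by blast
  then have "Tm = (\<lambda>y. (y ^ m') ^ m) ` U" unfolding Tm_def Um_def by (simp add: image_image)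
  also have "\<dots> = U"
  proof -
    have "(y ^ m') ^ m = y" if "y \<in> U" for y
      using that U_roots power_inverse_exponent(2)[OF m] unfolding m'_def by auto
    then show ?thesis by simp
  qed
  finally show ?thesis using U(1) unfolding Tm_def by simp
qed

lemma same_block_power:
  assumes "same_block P z w" "\<not> p dvd m"
  shows "same_block P (z ^ m) (w ^ m)"
proof -
  obtain A where A: "A \<in> P" "z \<in> A" "w \<in> A" using assms(1) unfolding same_block_def by blast
  define B where "B = (\<lambda>z. z ^ m) ` A"
  have "B \<in> P" unfolding B_def by (rule block_power_image[OF A(1) assms(2)])
  moreover have "z ^ m \<in> B" "w ^ m \<in> B" unfolding B_def using A(2,3) by simp_all
  ultimately show ?thesis unfolding same_block_def by blast
qed

text \<open>Inversion is the power map \<open>z \<mapsto> z\<^sup>p\<^sup>-\<^sup>1\<close>, so it permutes the blocks as well.\<close>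
lemma inverse_block: "A \<in> P \<Longrightarrow> inv_set (mu p) A \<in> P"
proof -
  assume A: "A \<in> P"
  have "inv_set (mu p) A = (\<lambda>z. z ^ (p - 1)) ` A"
    unfolding inv_set_def using block_subset[OF A] mu_inv[of p] p_gt_1 inverse_as_power
    by (intro image_cong) auto
  moreover have "\<not> p dvd (p - 1)" using p_gt_1 dvd_imp_le[of p "p - 1"] by auto
  ultimately show ?thesis using block_power_image[OF A] by simp
qed

end

theorem (in roots_of_unity) unital_is_fusion:
  assumes "unital_partition (mu p) P"
  shows "fusion_partition (mu p) P"
proof -
  interpret roots_partition p x P
    by (intro roots_partition.intro roots_of_unity_axioms roots_partition_axioms.intro assms)
  show ?thesis using fusion_partitionI[OF comm_group_mu _ unital inverse_block] finite_roots by simp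
qed

text \<open>A primitive root \<open>\<alpha>\<close> modulo \<open>p\<close> enumerates the nontrivial roots of unity as
  \<open>\<gamma> e = x\<^bsup>\<alpha>\<^sup>e\<^esup>\<close>, with \<open>\<gamma> e = \<gamma> f\<close> iff \<open>e \<equiv> f (mod p - 1)\<close>; this discrete logarithm
  translates the partitions of \<open>\<mu>\<^sub>p\<close> into partitions of \<open>\<int>/(p - 1)\<close>.\<close>
locale roots_generator = roots_of_unity +
  fixes \<alpha> :: int
  assumes primitive_root: "unit_group_generator p \<alpha>"
begin

definition a :: nat where "a = nat (\<alpha> mod int p)"

definition \<gamma> :: "nat \<Rightarrow> complex" where "\<gamma> e = x ^ (a ^ e)"

lemma int_a: "int a = \<alpha> mod int p"
  unfolding a_def using p_gt_1 by simp

lemma a_not_dvd: "\<not> p dvd a"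
proof
  assume "p dvd a"
  have "a < p" using int_a p_gt_1 by (metis of_nat_less_iff pos_mod_bound of_nat_0_less_iff less_trans zero_less_one)
  with \<open>p dvd a\<close> have "a = 0" by (metis dvd_imp_le not_less not_gr0)
  then have "int p dvd \<alpha>" using int_a by (simp add: dvd_eq_mod_eq_0)
  moreover have "coprime \<alpha> (int p)" using primitive_root by (simp add: unit_group_generator_def)
  ultimately have "int p dvd 1" by (metis coprime_common_divisor dvd_refl)
  then show False using p_gt_1 by simp
qed

lemma alpha_power_mod: "nat ((\<alpha> ^ n) mod int p) = a ^ n mod p"
proof -
  have "int (a ^ n mod p) = (\<alpha> mod int p) ^ n mod int p" by (simp add: int_a of_nat_mod)
  also have "\<dots> = \<alpha> ^ n mod int p" by (simp add: power_mod)
  finally show ?thesis by simp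
qed

lemma \<gamma>_in_roots: "\<gamma> e \<in> roots" unfolding \<gamma>_def using x_root by simp

lemma a_power_not_dvd: "\<not> p dvd a ^ k"
  using a_not_dvd prime_dvd_power[OF prime_p] by blast

lemma \<gamma>_ne_1: "\<gamma> e \<noteq> 1"
  unfolding \<gamma>_def x_power_eq_1_iff using a_power_not_dvd .

lemma \<gamma>_power: "\<gamma> e ^ (a ^ f) = \<gamma> (e + f)"
  unfolding \<gamma>_def by (simp add: power_mult power_add)

lemma \<gamma>_mod: "\<gamma> e = \<gamma> (e mod (p - 1))"
proof -
  have "[a ^ (p - 1) = 1] (mod p)" using fermat_theorem prime_p a_not_dvd by blast
  then have "[(a ^ (p - 1)) ^ (e div (p - 1)) * a ^ (e mod (p - 1)) = a ^ (e mod (p - 1))] (mod p)"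
    using cong_mult[OF cong_pow cong_refl] by fastforce
  moreover have "(a ^ (p - 1)) ^ (e div (p - 1)) * a ^ (e mod (p - 1)) = a ^ e"
    by (metis power_mult power_add div_mult_mod_eq mult.commute)
  ultimately show ?thesis unfolding \<gamma>_def x_power_eq_iff by (simp add: cong_def)
qed

lemma \<gamma>_surj: "z \<in> roots \<Longrightarrow> z \<noteq> 1 \<Longrightarrow> \<exists>e. z = \<gamma> e"
proof -
  assume z: "z \<in> roots" "z \<noteq> 1"
  obtain n where n: "z = x ^ n" using z generator by auto
  have "n mod p \<noteq> 0" using z n x_power_eq_iff[of n 0] by auto
  then have "\<not> p dvd (n mod p)" by (simp add: dvd_mod_iff dvd_eq_mod_eq_0)
  then have "coprime (int (n mod p)) (int p)"
    using prime_imp_coprime prime_p by (metis coprime_commute coprime_int_iff)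
  then obtain i where "[\<alpha> ^ i = int (n mod p)] (mod int p)"
    using primitive_root unfolding unit_group_generator_def by blast
  then have "\<alpha> ^ i mod int p = int (n mod p)" by (simp add: cong_def of_nat_mod)
  then have "a ^ i mod p = n mod p" using alpha_power_mod[of i] by simp
  then have "\<gamma> i = z" unfolding \<gamma>_def n x_power_eq_iff by simp
  then show ?thesis by metis
qed

lemma \<gamma>_eq_iff: "\<gamma> e = \<gamma> f \<longleftrightarrow> e mod (p - 1) = f mod (p - 1)"
proof -
  have image: "\<gamma> ` {..<p - 1} = roots - {1}"
  proof
    show "\<gamma> ` {..<p - 1} \<subseteq> roots - {1}" using \<gamma>_in_roots \<gamma>_ne_1 by auto
    show "roots - {1} \<subseteq> \<gamma> ` {..<p - 1}"
      using \<gamma>_surj \<gamma>_mod p_gt_1 by (fastforce intro: image_eqI[of _ _ "_ mod (p - 1)"])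
  qed
  have "card (roots - {1}) = p - 1" using card_roots finite_roots x_root by (simp add: card_Diff_singleton)
  then have inj: "inj_on \<gamma> {..<p - 1}" using image by (intro eq_card_imp_inj_on) auto
  have "\<gamma> (e mod (p - 1)) = \<gamma> (f mod (p - 1)) \<longleftrightarrow> e mod (p - 1) = f mod (p - 1)"
    using inj_on_eq_iff[OF inj] p_gt_1 by simp
  then show ?thesis using \<gamma>_mod by metis
qed

lemma partition_eq_by_exponents:
  assumes "block_partition (mu p) P" "block_partition (mu p) Q"
    and same: "\<And>e f. same_block P (\<gamma> e) (\<gamma> f) \<longleftrightarrow> same_block Q (\<gamma> e) (\<gamma> f)"
  shows "P = Q"
proof (rule block_partition.partition_eqI[OF assms(1,2)])
  fix z w assume z: "z \<in> carrier (mu p)"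
  show "same_block P z w \<longleftrightarrow> same_block Q z w"
  proof (cases "z = 1 \<or> w = 1")
    case True
    have "same_block R z w \<longleftrightarrow> z = w" if "block_partition (mu p) R" for R
      using True block_partition.same_block_unit[OF that] same_block_sym[of R] by force
    then show ?thesis using assms(1,2) by blast
  next
    case False
    have in_roots: "w \<in> roots" if "same_block R z w" "block_partition (mu p) R" for R
      using that block_partition.block_subset unfolding same_block_def by fastforce
    show ?thesis
    proof (cases "w \<in> roots")
      case True
      obtain e f where "z = \<gamma> e" "w = \<gamma> f" using False z True \<gamma>_surj by (metis mu_simps(1) mem_Collect_eq)
      then show ?thesis using same by simp
    next
      case False
      then show ?thesis using in_roots assms(1,2) by blast
    qed
  qed
qed

lemma Apart_eq: "Apart p x \<alpha> u i = {\<gamma> (i + u * j) | j. j \<le> (p - 1) div u - 1}"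
proof -
  have "x [^]\<^bsub>mu p\<^esub> (\<alpha> ^ i * (\<alpha> ^ u) ^ j) = \<gamma> (i + u * j)" for j
  proof -
    have "\<alpha> ^ i * (\<alpha> ^ u) ^ j = \<alpha> ^ (i + u * j)" by (simp add: power_add power_mult)
    then have "x [^]\<^bsub>mu p\<^esub> (\<alpha> ^ i * (\<alpha> ^ u) ^ j) = x ^ (a ^ (i + u * j) mod p)"
      using int_power_x alpha_power_mod by simp
    also have "\<dots> = \<gamma> (i + u * j)" unfolding \<gamma>_def x_power_eq_iff by simp
    finally show ?thesis .
  qed
  then show ?thesis unfolding Apart_def Let_def by simp
qed

lemma mem_Apart:
  assumes u: "u dvd p - 1" and i: "i < u"
  shows "\<gamma> f \<in> Apart p x \<alpha> u i \<longleftrightarrow> f mod u = i"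
proof
  assume "\<gamma> f \<in> Apart p x \<alpha> u i"
  then obtain j where "\<gamma> f = \<gamma> (i + u * j)" unfolding Apart_eq by blast
  then have "f mod (p - 1) mod u = (i + u * j) mod (p - 1) mod u" unfolding \<gamma>_eq_iff by simp
  then show "f mod u = i" using u i by (simp add: mod_mod_cancel)
next
  assume fi: "f mod u = i"
  obtain v where v: "p - 1 = u * v" using u by blast
  define t where "t = f mod (p - 1)"
  have "t mod u = i" unfolding t_def using u fi by (simp add: mod_mod_cancel)
  then have t: "t = i + u * (t div u)" by (metis add.commute div_mult_mod_eq mult.commute)
  have "t < p - 1" unfolding t_def using p_gt_1 by simp
  then have "t div u < v" using v less_mult_imp_div_less[of t v u] by (simp add: mult.commute)
  then have "t div u \<le> (p - 1) div u - 1" using v i by simp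
  moreover have "\<gamma> f = \<gamma> (i + u * (t div u))" using t \<gamma>_mod[of f] unfolding t_def[symmetric] by simp
  ultimately show "\<gamma> f \<in> Apart p x \<alpha> u i" unfolding Apart_eq by (intro CollectI exI conjI)
qed

lemma Apart_subset: "Apart p x \<alpha> u i \<subseteq> range \<gamma>"
  unfolding Apart_eq by auto

lemma Apart_roots: "Apart p x \<alpha> u i \<subseteq> roots"
  using Apart_subset \<gamma>_in_roots by blast

lemma Ppart_members: "A \<in> Ppart p x \<alpha> u \<longleftrightarrow> A = {1} \<or> (\<exists>i<u. A = Apart p x \<alpha> u i)"
  unfolding Ppart_def by auto

lemma Apart_in_Ppart: "i < u \<Longrightarrow> Apart p x \<alpha> u i \<in> Ppart p x \<alpha> u"
  unfolding Ppart_def by blast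

lemma \<gamma>_in_Apart: "u dvd p - 1 \<Longrightarrow> \<gamma> f \<in> Apart p x \<alpha> u (f mod u)"
  using mem_Apart[of u "f mod u" f] p_gt_1 by (cases "u = 0") auto

lemma Apart_disjoint:
  assumes u: "u dvd p - 1" and "i < u" "k < u" "i \<noteq> k"
  shows "Apart p x \<alpha> u i \<inter> Apart p x \<alpha> u k = {}"
proof (rule ccontr)
  assume "Apart p x \<alpha> u i \<inter> Apart p x \<alpha> u k \<noteq> {}"
  then obtain z where z: "z \<in> Apart p x \<alpha> u i" "z \<in> Apart p x \<alpha> u k" by blast
  then obtain f where "z = \<gamma> f" using Apart_subset by blast
  then show False using z assms mem_Apart[OF u] by simp
qed

lemma Ppart_cover:
  assumes u: "u dvd p - 1"
  shows "\<Union> (Ppart p x \<alpha> u) = roots"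
proof
  show "\<Union> (Ppart p x \<alpha> u) \<subseteq> roots" using Apart_roots unfolding Ppart_def by auto
  show "roots \<subseteq> \<Union> (Ppart p x \<alpha> u)"
  proof
    fix z assume z: "z \<in> roots"
    show "z \<in> \<Union> (Ppart p x \<alpha> u)"
    proof (cases "z = 1")
      case False
      then obtain f where "z = \<gamma> f" using z \<gamma>_surj by auto
      moreover have "Apart p x \<alpha> u (f mod u) \<in> Ppart p x \<alpha> u"
        using Apart_in_Ppart u p_gt_1 by (cases "u = 0") auto
      ultimately show ?thesis using \<gamma>_in_Apart[OF u, of f] by blast
    qed (simp add: Ppart_def)
  qed
qed

lemma Ppart_partition:
  assumes u: "u dvd p - 1"
  shows "block_partition (mu p) (Ppart p x \<alpha> u)"
proof
  have one_notin: "1 \<notin> Apart p x \<alpha> u i" for i using Apart_subset[of u i] \<gamma>_ne_1 by auto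
  show "finite (carrier (mu p))" using finite_roots by simp
  show "is_partition_with_unit (mu p) (Ppart p x \<alpha> u)"
    unfolding is_partition_with_unit_def
  proof (intro conjI ballI impI)
    fix A assume A: "A \<in> Ppart p x \<alpha> u"
    show "A \<noteq> {}" "A \<subseteq> carrier (mu p)"
    proof (atomize (full), cases "A = {1}")
      case False
      then obtain i where "i < u" "A = Apart p x \<alpha> u i" using A Ppart_members by blast
      then show "A \<noteq> {} \<and> A \<subseteq> carrier (mu p)" using \<gamma>_in_Apart[OF u, of i] Apart_roots by auto
    qed simp
  next
    fix A B assume A: "A \<in> Ppart p x \<alpha> u" and B: "B \<in> Ppart p x \<alpha> u" and "A \<noteq> B"
    then consider "A = {1}" "B \<noteq> {1}" | "A \<noteq> {1}" "B = {1}" | "A \<noteq> {1}" "B \<noteq> {1}" by blast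
    then show "A \<inter> B = {}"
    proof cases
      case 3
      then obtain i k where "A = Apart p x \<alpha> u i" "i < u" "B = Apart p x \<alpha> u k" "k < u"
        using A B Ppart_members by meson
      then show ?thesis using Apart_disjoint[OF u] \<open>A \<noteq> B\<close> by blast
    qed (use A B Ppart_members one_notin in blast)+
  next
    show "\<Union> (Ppart p x \<alpha> u) = carrier (mu p)" using Ppart_cover[OF u] by simp
  qed (simp add: Ppart_def)
qed

lemma same_block_Ppart:
  assumes u: "u dvd p - 1"
  shows "same_block (Ppart p x \<alpha> u) (\<gamma> e) (\<gamma> f) \<longleftrightarrow> e mod u = f mod u"
proof
  assume "same_block (Ppart p x \<alpha> u) (\<gamma> e) (\<gamma> f)"
  then obtain B where B: "B \<in> Ppart p x \<alpha> u" "\<gamma> e \<in> B" "\<gamma> f \<in> B" unfolding same_block_def by blast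
  then obtain i where "i < u" "B = Apart p x \<alpha> u i" using \<gamma>_ne_1 Ppart_members by blast
  then show "e mod u = f mod u" using mem_Apart[OF u] B by simp
next
  assume "e mod u = f mod u"
  then have "\<gamma> e \<in> Apart p x \<alpha> u (e mod u)" "\<gamma> f \<in> Apart p x \<alpha> u (e mod u)"
    using \<gamma>_in_Apart[OF u] by metis+
  moreover have "Apart p x \<alpha> u (e mod u) \<in> Ppart p x \<alpha> u"
    using Apart_in_Ppart u p_gt_1 by (cases "u = 0") auto
  ultimately show "same_block (Ppart p x \<alpha> u) (\<gamma> e) (\<gamma> f)" unfolding same_block_def by blast
qed

lemma \<gamma>_same_class:
  assumes "u dvd p - 1" "e mod u = f mod u"
  shows "\<exists>k. \<gamma> f = \<gamma> (e + u * k)"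
proof -
  obtain k where "(e + u * k) mod (p - 1) = f mod (p - 1)"
    using reach_by_multiples[OF assms(1) _ assms(2)] p_gt_1 by auto
  then show ?thesis using \<gamma>_eq_iff by metis
qed

text \<open>The automorphism \<open>z \<mapsto> z\<^bsup>\<alpha>\<^sup>u\<^esup>\<close> moves \<open>\<gamma> e\<close> to \<open>\<gamma> (e + u)\<close>; so the functions constant
  on the blocks of \<open>\<P>\<^sub>u\<close> are exactly the functions invariant under it.\<close>
lemma Ppart_block_constant_iff:
  assumes u: "u dvd p - 1"
  shows "(\<forall>B\<in>Ppart p x \<alpha> u. \<forall>z\<in>B. \<forall>w\<in>B. f z = f w) \<longleftrightarrow> (\<forall>z\<in>roots. f (z ^ (a ^ u)) = f z)"
proof
  assume const: "\<forall>B\<in>Ppart p x \<alpha> u. \<forall>z\<in>B. \<forall>w\<in>B. f z = f w"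
  show "\<forall>z\<in>roots. f (z ^ (a ^ u)) = f z"
  proof
    fix z assume z: "z \<in> roots"
    show "f (z ^ (a ^ u)) = f z"
    proof (cases "z = 1")
      case False
      then obtain e where e: "z = \<gamma> e" using z \<gamma>_surj by blast
      have "same_block (Ppart p x \<alpha> u) (\<gamma> (e + u)) (\<gamma> e)" using same_block_Ppart[OF u] by simp
      then have "f (\<gamma> (e + u)) = f (\<gamma> e)" using const unfolding same_block_def by blast
      then show ?thesis using e \<gamma>_power[of e u] by simp
    qed simp
  qed
next
  assume inv: "\<forall>z\<in>roots. f (z ^ (a ^ u)) = f z"
  have iter: "f (\<gamma> (e + u * k)) = f (\<gamma> e)" for e k
  proof (induction k)
    case (Suc k)
    have "\<gamma> (e + u * Suc k) = \<gamma> (e + u * k) ^ (a ^ u)" by (simp add: \<gamma>_power algebra_simps)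
    then show ?case using Suc inv \<gamma>_in_roots by simp
  qed simp
  show "\<forall>B\<in>Ppart p x \<alpha> u. \<forall>z\<in>B. \<forall>w\<in>B. f z = f w"
  proof (intro ballI)
    fix B z w assume B: "B \<in> Ppart p x \<alpha> u" and zw: "z \<in> B" "w \<in> B"
    show "f z = f w"
    proof (cases "B = {1}")
      case False
      then obtain i where "B = Apart p x \<alpha> u i" using B Ppart_members by blast
      then obtain e e' where ee': "z = \<gamma> e" "w = \<gamma> e'" using zw Apart_subset by blast
      then have "e mod u = e' mod u"
        using same_block_Ppart[OF u] B zw unfolding same_block_def by blast
      then obtain k where "w = \<gamma> (e + u * k)" using \<gamma>_same_class[OF u] ee' by blast
      then show ?thesis using iter ee' by simp
    qed (use zw in simp)
  qed
qed

lemma Ppart_zspan_iff: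
  assumes u: "u dvd p - 1"
  shows "f \<in> zspan (Ppart p x \<alpha> u) \<longleftrightarrow>
    (\<forall>z. z \<notin> roots \<longrightarrow> f z = 0) \<and> (\<forall>z\<in>roots. f (z ^ (a ^ u)) = f z)"
  unfolding block_partition.zspan_iff[OF Ppart_partition[OF u]] Ppart_block_constant_iff[OF u] by simp

theorem Ppart_unital:
  assumes u: "u dvd p - 1"
  shows "unital_partition (mu p) (Ppart p x \<alpha> u)"
  unfolding unital_partition_def
proof (intro conjI ballI)
  show "is_partition_with_unit (mu p) (Ppart p x \<alpha> u)"
    using Ppart_partition[OF u] by (simp add: block_partition_def)
  fix f g assume "f \<in> zspan (Ppart p x \<alpha> u)" "g \<in> zspan (Ppart p x \<alpha> u)"
  then have f: "\<And>z. z \<in> carrier (mu p) \<Longrightarrow> f (z ^ (a ^ u)) = f z"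
    and g: "\<And>z. z \<in> carrier (mu p) \<Longrightarrow> g (z ^ (a ^ u)) = g z"
    unfolding Ppart_zspan_iff[OF u] by auto
  have iso: "(\<lambda>z. z ^ (a ^ u)) \<in> iso (mu p) (mu p)"
    using power_iso a_power_not_dvd by blast
  have "gr_mult (mu p) f g (z ^ (a ^ u)) = gr_mult (mu p) f g z" if "z \<in> carrier (mu p)" for z
    by (rule group.gr_mult_automorphism_invariant[OF comm_group.axioms(2)[OF comm_group_mu] iso])
       (use f g that in auto)
  then show "gr_mult (mu p) f g \<in> zspan (Ppart p x \<alpha> u)"
    unfolding Ppart_zspan_iff[OF u] by (simp add: gr_mult_mu)
qed

end

locale generated_partition = roots_generator +
  fixes P :: "complex set set"
  assumes unital: "unital_partition (mu p) P"

sublocale generated_partition \<subseteq> roots_partition p x P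
  by unfold_locales (rule unital)

context generated_partition
begin

text \<open>Power maps shift exponents: \<open>(\<gamma> e)\<^bsup>\<alpha>\<^sup>k\<^esup> = \<gamma> (e + k)\<close>.\<close>
lemma same_block_shift:
  "same_block P (\<gamma> e) (\<gamma> f) \<Longrightarrow> same_block P (\<gamma> (e + k)) (\<gamma> (f + k))"
  using same_block_power[OF _ a_power_not_dvd] \<gamma>_power by metis

text \<open>The exponents \<open>e\<close> with \<open>\<gamma> e\<close> in the block of \<open>x = \<gamma> 0\<close> are additively closed and
  periodic modulo \<open>p - 1\<close>, hence they are the multiples of a divisor \<open>u\<close> of \<open>p - 1\<close>.\<close>
lemma stabiliser_multiples:
  "\<exists>u. u dvd p - 1 \<and> (\<forall>e. same_block P (\<gamma> 0) (\<gamma> e) \<longleftrightarrow> u dvd e)"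
proof (rule periodic_additive_set)
  show "0 < p - 1" using p_gt_1 by simp
  show "same_block P (\<gamma> 0) (\<gamma> 0)"
    using block_cover[of "\<gamma> 0"] \<gamma>_in_roots unfolding same_block_def by auto
  show "same_block P (\<gamma> 0) (\<gamma> (e + f))"
    if "same_block P (\<gamma> 0) (\<gamma> e)" "same_block P (\<gamma> 0) (\<gamma> f)" for e f
    using same_block_trans[OF that(2) same_block_shift[OF that(1), of f, simplified]]
    by (simp add: add.commute)
  show "same_block P (\<gamma> 0) (\<gamma> e) \<longleftrightarrow> same_block P (\<gamma> 0) (\<gamma> (e mod (p - 1)))" for e
    using \<gamma>_mod[of e] by simp
qed

text \<open>Then \<open>\<gamma> e\<close> and \<open>\<gamma> f\<close> share a block iff \<open>e \<equiv> f (mod u)\<close>: translate both by \<open>(p - 2) e\<close>,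
  which sends \<open>\<gamma> e\<close> to \<open>\<gamma> 0\<close>, or translate the block of \<open>\<gamma> 0\<close> by \<open>e\<close>.\<close>
lemma same_block_exponents:
  assumes u: "u dvd p - 1" and stab: "\<And>e. same_block P (\<gamma> 0) (\<gamma> e) \<longleftrightarrow> u dvd e"
  shows "same_block P (\<gamma> e) (\<gamma> f) \<longleftrightarrow> e mod u = f mod u"
proof
  assume "same_block P (\<gamma> e) (\<gamma> f)"
  then have "same_block P (\<gamma> (e + (p - 2) * e)) (\<gamma> (f + (p - 2) * e))" by (rule same_block_shift)
  moreover have ee: "e + (p - 2) * e = (p - 1) * e" using p_gt_1 by (simp add: algebra_simps diff_mult_distrib)
  moreover have "\<gamma> ((p - 1) * e) = \<gamma> 0" using \<gamma>_mod[of "(p - 1) * e"] by simp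
  ultimately have "u dvd f + (p - 2) * e" using stab by simp
  moreover have "u dvd e + (p - 2) * e" using u ee by simp
  ultimately have "[f + (p - 2) * e = e + (p - 2) * e] (mod u)" by (simp add: cong_def dvd_eq_mod_eq_0)
  then have "[f = e] (mod u)" by (simp only: cong_add_rcancel_nat)
  then show "e mod u = f mod u" by (simp add: cong_def)
next
  assume "e mod u = f mod u"
  then obtain k where k: "\<gamma> f = \<gamma> (e + u * k)" using \<gamma>_same_class[OF u] by blast
  have "same_block P (\<gamma> 0) (\<gamma> (u * k))" using stab by simp
  then have "same_block P (\<gamma> (0 + e)) (\<gamma> (u * k + e))" by (rule same_block_shift)
  then show "same_block P (\<gamma> e) (\<gamma> f)" using k by (simp add: add.commute)
qed

lemma partition_is_Ppart: "\<exists>u. u dvd p - 1 \<and> P = Ppart p x \<alpha> u"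
proof -
  obtain u where u: "u dvd p - 1" and stab: "\<And>e. same_block P (\<gamma> 0) (\<gamma> e) \<longleftrightarrow> u dvd e"
    using stabiliser_multiples by blast
  have "P = Ppart p x \<alpha> u"
    by (rule partition_eq_by_exponents[OF block_partition_axioms Ppart_partition[OF u]])
       (simp add: same_block_exponents[OF u stab] same_block_Ppart[OF u])
  then show ?thesis using u by blast
qed

end

theorem (in roots_generator) unital_partition_classification:
  "unital_partition (mu p) P \<Longrightarrow> \<exists>u. u dvd p - 1 \<and> P = Ppart p x \<alpha> u"
  by (rule generated_partition.partition_is_Ppart)
     (intro generated_partition.intro roots_generator_axioms generated_partition_axioms.intro)

theorem theorem3p10:
  fixes p :: nat and x :: complex and \<alpha> :: int
  assumes "Factorial_Ring.prime p" and "odd p"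
    and "x \<in> carrier (mu p)"
    and "carrier (mu p) = {x [^]\<^bsub>mu p\<^esub> (n::nat) | n. True}"
    and "unit_group_generator p \<alpha>"
  shows "(\<forall>u. u dvd p - 1 \<longrightarrow> unital_partition (mu p) (Ppart p x \<alpha> u))
       \<and> (\<forall>P. unital_partition (mu p) P \<longrightarrow> (\<exists>u. u dvd p - 1 \<and> P = Ppart p x \<alpha> u))
       \<and> (\<forall>P. unital_partition (mu p) P \<longrightarrow> fusion_partition (mu p) P)"
proof -
  have "x ^ p = 1" using assms(3) by simp
  moreover have "{z. z ^ p = 1} = range (\<lambda>n. x ^ n)" using assms(4) by auto
  ultimately interpret roots_generator p x \<alpha>
    using assms(1,5) by unfold_locales
  show ?thesis
    using Ppart_unital unital_partition_classification unital_is_fusion by blast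
qed

end
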